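(* Consider the Highest Diversity Contribution (HDC) selection mechanism on \textsc{LOTZ}, using as diversity measure either the hypervolume contribution $\mathrm{HVC}(x,P)$ with reference point $(r_1,r_2)$ satisfying $r_1\le -n^2$ and $r_2\le -n^2$, or the crowding distance contribution $\mathrm{CDC}(x,P)$, applied to a population $P$ containing only search points on the Pareto front. Then the parent chosen by HDC always has either the minimum or the maximum number of ones among all search points in $P$.
   Context: Search space $\{0,1\}^n$; objectives maximised. $\textsc{LOTZ}(x)=(\mathrm{LO}(x),\mathrm{TZ}(x))$, $\mathrm{LO}$ = number of leading ones, $\mathrm{TZ}$ = number of trailing zeros. The Pareto set is $\{1^i0^{n-i}:0\le i\le n\}$; populations consist of points with distinct objective vectors. HDC: select an individual with the highest diversity score, ties broken uniformly at random. HVC: sort $P$ by increasing $f_1$ as $x_1,\dots,x_\mu$, set $f_1(x_0)=r_1$, $f_2(x_{\mu+1})=r_2$, $\mathrm{HVC}(x_i,P)=(f_1(x_i)-f_1(x_{i-1}))(f_2(x_i)-f_2(x_{i+1}))$. CDC: each point starts at 0; for each objective $m$, sort ascending by $f_m$, boundary points get $\infty$, intermediate $P[i]$ gets $+(f_m(P[i+1])-f_m(P[i-1]))/(f_m^{\max}-f_m^{\min})$, with $f_m^{\max},f_m^{\min}$ the max and min values of objective $m$. *)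

theory Defs
  imports Complex_Main "HOL-Library.Extended_Real"
begin

text \<open>Bit strings of length n are boolean lists; True = 1, False = 0.\<close>

definition LO :: "bool list \<Rightarrow> nat" where
  "LO xs = length (takeWhile (\<lambda>b. b) xs)"

definition TZ :: "bool list \<Rightarrow> nat" where
  "TZ xs = length (takeWhile (\<lambda>b. \<not> b) (rev xs))"

definition LOTZ :: "bool list \<Rightarrow> real \<times> real" where
  "LOTZ xs = (real (LO xs), real (TZ xs))"

definition ones :: "bool list \<Rightarrow> nat" where
  "ones xs = length (filter (\<lambda>b. b) xs)"

definition pareto_set :: "nat \<Rightarrow> bool list set" where
  "pareto_set n = {replicate i True @ replicate (n - i) False | i. i \<le> n}"

definition hvc :: "real \<Rightarrow> real \<Rightarrow> ('a \<Rightarrow> real \<times> real) \<Rightarrow> 'a set \<Rightarrow> 'a \<Rightarrow> real" where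
  "hvc r1 r2 f P x =
     (let prev1 = (if \<exists>y\<in>P. fst (f y) < fst (f x)
                   then Max {fst (f y) | y. y \<in> P \<and> fst (f y) < fst (f x)} else r1);
          next2 = (if \<exists>y\<in>P. fst (f y) > fst (f x)
                   then snd (f (ARG_MIN (\<lambda>y. fst (f y)) y. y \<in> P \<and> fst (f y) > fst (f x)))
                   else r2)
      in (fst (f x) - prev1) * (snd (f x) - next2))"

definition cd_obj :: "('a \<Rightarrow> real) \<Rightarrow> 'a set \<Rightarrow> 'a \<Rightarrow> ereal" where
  "cd_obj g P x =
     (if g x = Min (g ` P) \<or> g x = Max (g ` P) then \<infinity>
      else ereal ((Min {g y | y. y \<in> P \<and> g y > g x} - Max {g y | y. y \<in> P \<and> g y < g x})
                  / (Max (g ` P) - Min (g ` P))))"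

definition cdc :: "('a \<Rightarrow> real \<times> real) \<Rightarrow> 'a set \<Rightarrow> 'a \<Rightarrow> ereal" where
  "cdc f P x = cd_obj (\<lambda>y. fst (f y)) P x + cd_obj (\<lambda>y. snd (f y)) P x"

end

theory Submission
  imports Defs
begin

(* On the Pareto front every point is 1^k 0^(n-k) with LOTZ value (k, n - k), so the population is
   a chain ordered by k = ones.  Suppose the selected x is neither minimal nor maximal in k and let
   xm be the point with the fewest ones.  For CDC, xm is a boundary point of the first objective,
   so its contribution is infinite, whereas x is a boundary point of neither objective and gets a
   finite one.  For HVC, the box of xm reaches back to r1 <= -n^2 in the first objective and has
   height at least 1 in the second, so its contribution is at least n^2; the box of x is spanned
   by two neighbours inside [0, n], with width < n and height <= n, so its contribution is below
   n^2. *)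

lemma arg_min_satisfies_if_finite:
  fixes g :: "'a \<Rightarrow> 'b::order"
  assumes "finite {y. Q y}" and "Q z"
  shows "Q (ARG_MIN g y. Q y)"
  using arg_min_if_finite(1)[of "{y. Q y}" g] assms unfolding arg_min_on_def by auto

lemma hvc_upper_neighbour:
  fixes f :: "'a \<Rightarrow> real \<times> real"
  assumes "finite P" and "z \<in> P" "fst (f x) < fst (f z)"
  defines "a \<equiv> ARG_MIN (\<lambda>y. fst (f y)) y. y \<in> P \<and> fst (f y) > fst (f x)"
  shows "a \<in> P" and "fst (f x) < fst (f a)"
proof -
  have "finite {y. y \<in> P \<and> fst (f y) > fst (f x)}"
    using assms(1) by simp
  from arg_min_satisfies_if_finite[OF this, of z "\<lambda>y. fst (f y)"] assms(2,3)
  show "a \<in> P" and "fst (f x) < fst (f a)"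
    unfolding a_def by simp_all
qed

lemma hvc_interior_eq:
  fixes f :: "'a \<Rightarrow> real \<times> real"
  assumes "finite P" and "y \<in> P" "fst (f y) < fst (f x)" and "z \<in> P" "fst (f x) < fst (f z)"
  obtains p a where "p \<in> P" "fst (f p) < fst (f x)" and "a \<in> P" "fst (f x) < fst (f a)"
    and "hvc r1 r2 f P x = (fst (f x) - fst (f p)) * (snd (f x) - snd (f a))"
proof -
  define S where "S = {fst (f y) | y. y \<in> P \<and> fst (f y) < fst (f x)}"
  define a where "a = (ARG_MIN (\<lambda>y. fst (f y)) y. y \<in> P \<and> fst (f y) > fst (f x))"
  have "finite S" "S \<noteq> {}"
    unfolding S_def using assms(1-3) by auto
  then have "Max S \<in> S"
    by (rule Max_in)
  then obtain p where p: "p \<in> P" "fst (f p) < fst (f x)" "Max S = fst (f p)"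
    unfolding S_def by blast
  have "\<exists>y\<in>P. fst (f y) < fst (f x)" "\<exists>y\<in>P. fst (f y) > fst (f x)"
    using assms(2-5) by blast+
  then have "hvc r1 r2 f P x = (fst (f x) - Max S) * (snd (f x) - snd (f a))"
    unfolding hvc_def Let_def S_def a_def by (simp only: if_True)
  with p show thesis
    using that hvc_upper_neighbour[OF assms(1,4,5)] unfolding a_def by simp
qed

lemma hvc_lower_boundary_eq:
  fixes f :: "'a \<Rightarrow> real \<times> real"
  assumes "finite P" and "\<forall>y\<in>P. fst (f x) \<le> fst (f y)" and "z \<in> P" "fst (f x) < fst (f z)"
  obtains a where "a \<in> P" "fst (f x) < fst (f a)"
    and "hvc r1 r2 f P x = (fst (f x) - r1) * (snd (f x) - snd (f a))"
proof -
  define a where "a = (ARG_MIN (\<lambda>y. fst (f y)) y. y \<in> P \<and> fst (f y) > fst (f x))"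
  have "\<not> (\<exists>y\<in>P. fst (f y) < fst (f x))" "\<exists>y\<in>P. fst (f y) > fst (f x)"
    using assms(2-4) by (auto simp: not_less)
  then have "hvc r1 r2 f P x = (fst (f x) - r1) * (snd (f x) - snd (f a))"
    unfolding hvc_def Let_def a_def by (simp only: if_True if_False)
  then show thesis
    using that hvc_upper_neighbour[OF assms(1,3,4)] unfolding a_def by simp
qed

lemma cdc_eq_infinity_iff:
  "cdc f P x = \<infinity> \<longleftrightarrow>
     cd_obj (\<lambda>y. fst (f y)) P x = \<infinity> \<or> cd_obj (\<lambda>y. snd (f y)) P x = \<infinity>"
proof -
  have "cd_obj g P x \<noteq> -\<infinity>" for g :: "'a \<Rightarrow> real"
    by (simp add: cd_obj_def)
  then show ?thesis
    unfolding cdc_def by (metis ereal_plus_eq_PInfty)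
qed

lemma strictly_between_not_Min_Max:
  fixes g :: "'a \<Rightarrow> 'b::linorder"
  assumes "finite P" and "y \<in> P" "g y < g x" and "z \<in> P" "g x < g z"
  shows "g x \<noteq> Min (g ` P) \<and> g x \<noteq> Max (g ` P)"
proof -
  have "Min (g ` P) \<le> g y" "g z \<le> Max (g ` P)"
    using assms by auto
  with assms(3,5) show ?thesis by auto
qed

lemma strictly_between_if_not_Min_Max:
  fixes g :: "'a \<Rightarrow> 'b::linorder"
  assumes "finite P" "x \<in> P" "g x \<noteq> Min (g ` P)" "g x \<noteq> Max (g ` P)"
  obtains y z where "y \<in> P" "\<forall>v\<in>P. g y \<le> g v" "g y < g x" and "z \<in> P" "g x < g z"
proof -
  have "Min (g ` P) \<in> g ` P" "Max (g ` P) \<in> g ` P"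
    using assms(1,2) by (auto intro!: Min_in Max_in)
  then obtain y z where y: "y \<in> P" "g y = Min (g ` P)" and z: "z \<in> P" "g z = Max (g ` P)"
    by (metis imageE)
  have "\<forall>v\<in>P. g y \<le> g v" "g y \<le> g x" "g x \<le> g z"
    using assms(1,2) y(2) z(2) by simp_all
  with assms(3,4) y z show thesis
    using that by (metis order.not_eq_order_implies_strict)
qed

lemma LOTZ_on_pareto_set:
  assumes "y \<in> pareto_set n"
  shows "ones y \<le> n" and "LOTZ y = (real (ones y), real n - real (ones y))"
proof -
  obtain i where i: "i \<le> n" "y = replicate i True @ replicate (n - i) False"
    using assms unfolding pareto_set_def by blast
  have "LO y = i" "TZ y = n - i" "ones y = i"
    unfolding i LO_def TZ_def ones_def by (simp_all add: takeWhile_append)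
  with i(1) show "ones y \<le> n" and "LOTZ y = (real (ones y), real n - real (ones y))"
    by (simp_all add: LOTZ_def)
qed

lemma hvc_LOTZ_interior_less:
  assumes "finite P" "P \<subseteq> pareto_set n" "x \<in> P"
    and "y \<in> P" "ones y < ones x" and "z \<in> P" "ones x < ones z"
  shows "hvc r1 r2 LOTZ P x < (real n)^2"
proof -
  have front: "ones v \<le> n" "LOTZ v = (real (ones v), real n - real (ones v))" if "v \<in> P" for v
    using LOTZ_on_pareto_set that assms(2) by blast+
  have "fst (LOTZ y) < fst (LOTZ x)" "fst (LOTZ x) < fst (LOTZ z)"
    by (simp_all add: front assms)
  then obtain p a where "p \<in> P" "fst (LOTZ p) < fst (LOTZ x)" "a \<in> P" "fst (LOTZ x) < fst (LOTZ a)"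
    and hvc: "hvc r1 r2 LOTZ P x = (fst (LOTZ x) - fst (LOTZ p)) * (snd (LOTZ x) - snd (LOTZ a))"
    using hvc_interior_eq[OF assms(1,4) _ assms(6)] by blast
  then have a: "ones x < ones a" "ones a \<le> n"
    by (simp_all add: front assms(3))
  have "hvc r1 r2 LOTZ P x = (real (ones x) - real (ones p)) * (real (ones a) - real (ones x))"
    using hvc \<open>p \<in> P\<close> \<open>a \<in> P\<close> by (simp add: front assms(3))
  also have "\<dots> < real n * (real (ones a) - real (ones x))"
    using a front(1)[OF assms(6)] assms(7) by (intro mult_strict_right_mono) simp_all
  also have "\<dots> \<le> real n * real n"
    using a by (intro mult_left_mono) simp_all
  finally show ?thesis
    by (simp add: power2_eq_square)
qed

lemma hvc_LOTZ_lower_boundary_ge: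
  assumes "finite P" "P \<subseteq> pareto_set n" "x \<in> P" "\<forall>y\<in>P. ones x \<le> ones y"
    and "z \<in> P" "ones x < ones z" and "r1 \<le> - ((real n)^2)"
  shows "(real n)^2 \<le> hvc r1 r2 LOTZ P x"
proof -
  have front: "LOTZ v = (real (ones v), real n - real (ones v))" if "v \<in> P" for v
    using LOTZ_on_pareto_set that assms(2) by blast
  have "\<forall>y\<in>P. fst (LOTZ x) \<le> fst (LOTZ y)" "fst (LOTZ x) < fst (LOTZ z)"
    by (simp_all add: front assms)
  then obtain a where "a \<in> P" "fst (LOTZ x) < fst (LOTZ a)"
    and "hvc r1 r2 LOTZ P x = (fst (LOTZ x) - r1) * (snd (LOTZ x) - snd (LOTZ a))"
    using hvc_lower_boundary_eq[OF assms(1) _ assms(5)] by blast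
  then have a: "ones x < ones a"
    and "hvc r1 r2 LOTZ P x = (real (ones x) - r1) * (real (ones a) - real (ones x))"
    by (simp_all add: front assms(3))
  moreover have "r1 \<le> 0"
    using assms(7) zero_le_power2[of "real n"] by linarith
  then have "(real n)^2 * 1 \<le> (real (ones x) - r1) * (real (ones a) - real (ones x))"
    using a assms(7) by (intro mult_mono) simp_all
  ultimately show ?thesis
    by simp
qed

lemma cdc_LOTZ_interior_neq_infinity:
  assumes "finite P" "P \<subseteq> pareto_set n" "x \<in> P"
    and "y \<in> P" "ones y < ones x" and "z \<in> P" "ones x < ones z"
  shows "cdc LOTZ P x \<noteq> \<infinity>"
proof -
  have front: "LOTZ v = (real (ones v), real n - real (ones v))" if "v \<in> P" for v
    using LOTZ_on_pareto_set that assms(2) by blast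
  have "fst (LOTZ x) \<noteq> Min ((\<lambda>v. fst (LOTZ v)) ` P) \<and> fst (LOTZ x) \<noteq> Max ((\<lambda>v. fst (LOTZ v)) ` P)"
    by (rule strictly_between_not_Min_Max[OF assms(1,4) _ assms(6)]) (simp_all add: front assms)
  moreover have "snd (LOTZ x) \<noteq> Min ((\<lambda>v. snd (LOTZ v)) ` P) \<and> snd (LOTZ x) \<noteq> Max ((\<lambda>v. snd (LOTZ v)) ` P)"
    by (rule strictly_between_not_Min_Max[OF assms(1,6) _ assms(4)]) (simp_all add: front assms)
  ultimately show ?thesis
    unfolding cdc_eq_infinity_iff cd_obj_def by simp
qed

lemma cdc_LOTZ_lower_boundary:
  assumes "finite P" "P \<subseteq> pareto_set n" "x \<in> P" "\<forall>y\<in>P. ones x \<le> ones y"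
  shows "cdc LOTZ P x = \<infinity>"
proof -
  have front: "LOTZ v = (real (ones v), real n - real (ones v))" if "v \<in> P" for v
    using LOTZ_on_pareto_set that assms(2) by blast
  have "fst (LOTZ x) = Min ((\<lambda>v. fst (LOTZ v)) ` P)"
    using assms(1,3,4) by (intro Min_eqI[symmetric]) (auto simp: front)
  then show ?thesis
    unfolding cdc_eq_infinity_iff cd_obj_def by simp
qed

theorem lemma9:
  fixes n :: nat and P :: "bool list set" and x :: "bool list" and r1 r2 :: real
  assumes "finite P" and "P \<noteq> {}" and "P \<subseteq> pareto_set n"
    and "x \<in> P"
    and "(r1 \<le> - ((real n)^2) \<and> r2 \<le> - ((real n)^2) \<and>
           (\<forall>y\<in>P. hvc r1 r2 LOTZ P y \<le> hvc r1 r2 LOTZ P x))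
         \<or> (\<forall>y\<in>P. cdc LOTZ P y \<le> cdc LOTZ P x)"
  shows "ones x = Min (ones ` P) \<or> ones x = Max (ones ` P)"
proof (rule ccontr)
  assume "\<not> ?thesis"
  then obtain xm xM where xm: "xm \<in> P" "\<forall>y\<in>P. ones xm \<le> ones y" "ones xm < ones x"
    and xM: "xM \<in> P" "ones x < ones xM"
    using strictly_between_if_not_Min_Max[OF assms(1,4)] by blast
  from assms(5) show False
  proof
    assume hvc: "r1 \<le> - ((real n)^2) \<and> r2 \<le> - ((real n)^2) \<and>
      (\<forall>y\<in>P. hvc r1 r2 LOTZ P y \<le> hvc r1 r2 LOTZ P x)"
    have "hvc r1 r2 LOTZ P x < (real n)^2"
      using hvc_LOTZ_interior_less assms(1,3,4) xm(1,3) xM by blast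
    moreover have "(real n)^2 \<le> hvc r1 r2 LOTZ P xm"
      using hvc_LOTZ_lower_boundary_ge assms(1,3,4) xm hvc by blast
    ultimately show False
      using hvc xm(1) by fastforce
  next
    assume cdc: "\<forall>y\<in>P. cdc LOTZ P y \<le> cdc LOTZ P x"
    have "cdc LOTZ P x \<noteq> \<infinity>"
      using cdc_LOTZ_interior_neq_infinity assms(1,3,4) xm(1,3) xM by blast
    moreover have "cdc LOTZ P xm = \<infinity>"
      using cdc_LOTZ_lower_boundary assms(1,3) xm(1,2) by blast
    ultimately show False
      using cdc xm(1) by fastforce
  qed
qed

end
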